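(* Let $N_A\ge 1$ be an integer, let $d_1,\dots,d_{N_A}\in\mathbb{R}$, and let $G_N$ be a finite set with $|G_N|$ elements. Consider the optimization problem: minimize $d\in\mathbb{R}$ subject to $$d-\sum_{i\in G_N} x_{ik}\ \ge\ d_k\quad \forall k=1,\dots,N_A,\qquad \sum_{k=1}^{N_A}x_{ik}=1\quad\forall i\in G_N,\qquad x_{ik}\in\{0,1\}.$$ Let $d_{\bar k}=\max_{k=1,\dots,N_A} d_k$ and $\Delta N=\sum_{i=1}^{N_A}\lfloor d_{\bar k}-d_i\rfloor$. Then the optimal value $d^*$ equals $$d^*=\begin{cases} d_{\bar k}, & \text{if } |G_N|\le \Delta N,\\[4pt] \displaystyle\min_{j=1,\dots,N_A}\left\{ d_j+\left\lceil \frac{|G_N|+\sum_{k=1}^{N_A}\lceil d_k-d_j\rceil}{N_A}\right\rceil\right\}, & \text{otherwise.}\end{cases}$$ *)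

theory Defs
  imports Main Complex_Main
begin

definition feasible_values :: "nat \<Rightarrow> (nat \<Rightarrow> real) \<Rightarrow> 'a set \<Rightarrow> real set" where
  "feasible_values NA d G =
     {D. \<exists>x :: 'a \<Rightarrow> nat \<Rightarrow> real.
          (\<forall>i\<in>G. \<forall>k\<in>{1..NA}. x i k \<in> {0, 1}) \<and>
          (\<forall>i\<in>G. (\<Sum>k=1..NA. x i k) = 1) \<and>
          (\<forall>k\<in>{1..NA}. D - (\<Sum>i\<in>G. x i k) \<ge> d k)}"

definition is_optimal_value :: "nat \<Rightarrow> (nat \<Rightarrow> real) \<Rightarrow> 'a set \<Rightarrow> real \<Rightarrow> bool" where
  "is_optimal_value NA d G v \<longleftrightarrow>
     v \<in> feasible_values NA d G \<and> (\<forall>D\<in>feasible_values NA d G. v \<le> D)"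

end

theory Submission
  imports Defs
begin

text \<open>Since each agent contributes exactly one unit, the assignment constraints only restrict
  how many agents go to each k: a value D is feasible iff D dominates every d k and the
  capacities \<lfloor>D - d k\<rfloor> add up to at least |G|. The total capacity is a step function of D that
  jumps only at the points d j + m with m integer, where it equals N_A m minus the sum of the
  \<lceil>d k - d j\<rceil>. Solving for the least admissible m at each j gives the candidate values; when
  |G| exceeds the capacity at the largest d k, the constraint D \<ge> d k is automatic for them and
  their minimum is optimal.\<close>

definition capacity :: "nat \<Rightarrow> (nat \<Rightarrow> real) \<Rightarrow> real \<Rightarrow> int" where
  "capacity NA d D = (\<Sum>k=1..NA. \<lfloor>D - d k\<rfloor>)"

lemma exists_assignment_within_capacities:
  fixes c :: "nat \<Rightarrow> nat" and G :: "'a set"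
  assumes "finite G" "card G \<le> (\<Sum>k=1..NA. c k)"
  shows "\<exists>x :: 'a \<Rightarrow> nat \<Rightarrow> real.
          (\<forall>i\<in>G. \<forall>k\<in>{1..NA}. x i k \<in> {0, 1}) \<and>
          (\<forall>i\<in>G. (\<Sum>k=1..NA. x i k) = 1) \<and>
          (\<forall>k\<in>{1..NA}. (\<Sum>i\<in>G. x i k) \<le> real (c k))"
  using assms
proof (induction G arbitrary: c rule: finite_induct)
  case empty
  then show ?case by auto
next
  case (insert a G)
  then have "(\<Sum>k=1..NA. c k) \<noteq> 0" by (simp del: sum_eq_0_iff)
  then obtain k0 where k0: "k0 \<in> {1..NA}" "c k0 \<noteq> 0" by (meson sum.neutral)
  define c' where "c' = c(k0 := c k0 - 1)"
  have "(\<Sum>k=1..NA. c k) = (\<Sum>k=1..NA. c' k) + 1"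
    using k0 by (simp add: c'_def sum.remove)
  then have "card G \<le> (\<Sum>k=1..NA. c' k)"
    using insert by simp
  then obtain x where x01: "\<forall>i\<in>G. \<forall>k\<in>{1..NA}. x i k \<in> {0, 1}"
    and x_row: "\<forall>i\<in>G. (\<Sum>k=1..NA. x i k) = 1"
    and x_col: "\<forall>k\<in>{1..NA}. (\<Sum>i\<in>G. x i k) \<le> real (c' k)"
    using insert.IH by blast
  define y where "y = (\<lambda>i k. if i = a then (if k = k0 then 1 else 0) else x i k :: real)"
  have y_col: "(\<Sum>i\<in>insert a G. y i k) = (if k = k0 then 1 else 0) + (\<Sum>i\<in>G. x i k)" for k
  proof -
    have "(\<Sum>i\<in>G. y i k) = (\<Sum>i\<in>G. x i k)"
      unfolding y_def using insert.hyps(2) by (intro sum.cong) auto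
    then show ?thesis
      using insert.hyps by (simp add: y_def)
  qed
  have "\<forall>i\<in>insert a G. \<forall>k\<in>{1..NA}. y i k \<in> {0, 1}"
    using x01 by (auto simp: y_def)
  moreover have "\<forall>i\<in>insert a G. (\<Sum>k=1..NA. y i k) = 1"
  proof
    fix i assume "i \<in> insert a G"
    then show "(\<Sum>k=1..NA. y i k) = 1"
      using k0 x_row by (cases "i = a") (simp_all add: y_def)
  qed
  moreover have "\<forall>k\<in>{1..NA}. (\<Sum>i\<in>insert a G. y i k) \<le> real (c k)"
    using x_col k0 by (auto simp: y_col c'_def of_nat_diff)
  ultimately show ?case by blast
qed

lemma feasible_values_iff:
  fixes G :: "'a set"
  assumes "finite G"
  shows "D \<in> feasible_values NA d G \<longleftrightarrow>
    (\<forall>k\<in>{1..NA}. d k \<le> D) \<and> int (card G) \<le> capacity NA d D"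
proof
  assume "D \<in> feasible_values NA d G"
  then obtain x :: "'a \<Rightarrow> nat \<Rightarrow> real" where x01: "\<forall>i\<in>G. \<forall>k\<in>{1..NA}. x i k \<in> {0, 1}"
    and x_row: "\<forall>i\<in>G. (\<Sum>k=1..NA. x i k) = 1"
    and x_col: "\<forall>k\<in>{1..NA}. D - (\<Sum>i\<in>G. x i k) \<ge> d k"
    unfolding feasible_values_def by blast
  have load_int: "(\<Sum>i\<in>G. x i k) \<in> \<int>" and load_nonneg: "0 \<le> (\<Sum>i\<in>G. x i k)"
    if "k \<in> {1..NA}" for k
    using x01 that by (fastforce intro: Ints_sum sum_nonneg)+
  have load_le: "(\<Sum>i\<in>G. x i k) \<le> of_int \<lfloor>D - d k\<rfloor>" if k: "k \<in> {1..NA}" for k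
  proof -
    obtain m where m: "(\<Sum>i\<in>G. x i k) = of_int m"
      using load_int[OF k] Ints_cases by blast
    have "of_int m \<le> D - d k" using x_col k m by fastforce
    then show ?thesis using m by (simp add: le_floor_iff)
  qed
  have "real (card G) = (\<Sum>i\<in>G. \<Sum>k=1..NA. x i k)" using x_row by simp
  also have "\<dots> = (\<Sum>k=1..NA. \<Sum>i\<in>G. x i k)" by (rule sum.swap)
  also have "\<dots> \<le> (\<Sum>k=1..NA. real_of_int \<lfloor>D - d k\<rfloor>)" using load_le by (rule sum_mono)
  finally have "int (card G) \<le> capacity NA d D"
    unfolding capacity_def by (metis of_int_le_iff of_int_of_nat_eq of_int_sum)
  moreover have "\<forall>k\<in>{1..NA}. d k \<le> D" using x_col load_nonneg by force
  ultimately show "(\<forall>k\<in>{1..NA}. d k \<le> D) \<and> int (card G) \<le> capacity NA d D"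
    by blast
next
  assume dom: "(\<forall>k\<in>{1..NA}. d k \<le> D) \<and> int (card G) \<le> capacity NA d D"
  define c where "c k = nat \<lfloor>D - d k\<rfloor>" for k
  have c: "int (c k) = \<lfloor>D - d k\<rfloor>" if "k \<in> {1..NA}" for k
    using dom that by (simp add: c_def)
  then have "int (\<Sum>k=1..NA. c k) = capacity NA d D"
    by (simp add: capacity_def)
  then have "card G \<le> (\<Sum>k=1..NA. c k)" using dom by linarith
  then obtain x :: "'a \<Rightarrow> nat \<Rightarrow> real" where x01: "\<forall>i\<in>G. \<forall>k\<in>{1..NA}. x i k \<in> {0, 1}"
    and x_row: "\<forall>i\<in>G. (\<Sum>k=1..NA. x i k) = 1"
    and x_col: "\<forall>k\<in>{1..NA}. (\<Sum>i\<in>G. x i k) \<le> real (c k)"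
    using exists_assignment_within_capacities[OF assms] by blast
  have "d k \<le> D - (\<Sum>i\<in>G. x i k)" if k: "k \<in> {1..NA}" for k
  proof -
    have "real (c k) \<le> D - d k"
      using c[OF k] of_int_floor_le[of "D - d k"] by (metis of_int_of_nat_eq)
    then show ?thesis using x_col k by fastforce
  qed
  then show "D \<in> feasible_values NA d G"
    unfolding feasible_values_def using x01 x_row by blast
qed

lemma capacity_mono:
  "D \<le> D' \<Longrightarrow> capacity NA d D \<le> capacity NA d D'"
  unfolding capacity_def by (intro sum_mono floor_mono) simp

lemma capacity_at_grid_point:
  "capacity NA d (d j + of_int m) = int NA * m - (\<Sum>k=1..NA. \<lceil>d k - d j\<rceil>)"
proof -
  have "\<lfloor>d j + of_int m - d k\<rfloor> = m - \<lceil>d k - d j\<rceil>" for k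
    using floor_add_int[of "- (d k - d j)" m] floor_minus[of "d k - d j"]
    by (simp add: algebra_simps)
  then show ?thesis by (simp add: capacity_def sum_subtractf)
qed

text \<open>The candidate value of the theorem at j is d j + m for the least such m.\<close>

lemma le_capacity_at_grid_point_iff:
  assumes "NA > 0"
  shows "int n \<le> capacity NA d (d j + of_int m) \<longleftrightarrow>
    \<lceil>(real n + of_int (\<Sum>k=1..NA. \<lceil>d k - d j\<rceil>)) / real NA\<rceil> \<le> m"
proof -
  let ?S = "\<Sum>k=1..NA. \<lceil>d k - d j\<rceil>"
  have "int n \<le> capacity NA d (d j + of_int m) \<longleftrightarrow> int n + ?S \<le> int NA * m"
    unfolding capacity_at_grid_point by linarith
  also have "\<dots> \<longleftrightarrow> real_of_int (int n + ?S) \<le> real_of_int (int NA * m)"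
    by (rule of_int_le_iff[symmetric])
  also have "\<dots> \<longleftrightarrow> real n + of_int ?S \<le> real NA * of_int m"
    by simp
  also have "\<dots> \<longleftrightarrow> (real n + of_int ?S) / real NA \<le> of_int m"
    using assms by (simp add: divide_le_eq mult.commute)
  finally show ?thesis by (simp add: ceiling_le_iff)
qed

text \<open>Between two grid points the capacity is constant, so rounding D down to the largest
  grid point below it loses no capacity.\<close>

lemma capacity_le_at_grid_point_below:
  assumes "NA \<ge> 1"
  obtains j where "j \<in> {1..NA}" "d j + of_int \<lfloor>D - d j\<rfloor> \<le> D"
    "capacity NA d D \<le> capacity NA d (d j + of_int \<lfloor>D - d j\<rfloor>)"
proof -
  let ?h = "\<lambda>k. d k + of_int \<lfloor>D - d k\<rfloor>"
  obtain j where j: "j \<in> {1..NA}" and j_max: "\<And>k. k \<in> {1..NA} \<Longrightarrow> ?h k \<le> ?h j"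
    using assms Max_in[of "?h ` {1..NA}"] Max_ge[of "?h ` {1..NA}"] by fastforce
  have "\<lfloor>D - d k\<rfloor> \<le> \<lfloor>?h j - d k\<rfloor>" if "k \<in> {1..NA}" for k
    using floor_mono[OF diff_right_mono[OF j_max[OF that], of "d k"]] by simp
  then have "capacity NA d D \<le> capacity NA d (?h j)"
    unfolding capacity_def by (rule sum_mono)
  moreover have "?h j \<le> D" using of_int_floor_le[of "D - d j"] by linarith
  ultimately show ?thesis using j that by blast
qed

context
  fixes NA :: nat and d :: "nat \<Rightarrow> real" and G :: "'a set"
  assumes NA_pos: "NA \<ge> 1" and finite_G: "finite G"
begin

lemma Max_le_feasible:
  "D \<in> feasible_values NA d G \<Longrightarrow> Max (d ` {1..NA}) \<le> D"
  using NA_pos by (auto simp: feasible_values_iff[OF finite_G])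

lemma is_optimal_value_Max:
  assumes "int (card G) \<le> capacity NA d (Max (d ` {1..NA}))"
  shows "is_optimal_value NA d G (Max (d ` {1..NA}))"
  using assms Max_le_feasible
  by (auto simp: is_optimal_value_def feasible_values_iff[OF finite_G])

lemma is_optimal_value_Min_grid:
  assumes exceeds: "capacity NA d (Max (d ` {1..NA})) < int (card G)"
  shows "is_optimal_value NA d G
           (Min ((\<lambda>j. d j + of_int \<lceil>(real (card G) + of_int (\<Sum>k=1..NA. \<lceil>d k - d j\<rceil>)) / real NA\<rceil>)
                 ` {1..NA}))"
proof -
  let ?m = "\<lambda>j. \<lceil>(real (card G) + of_int (\<Sum>k=1..NA. \<lceil>d k - d j\<rceil>)) / real NA\<rceil>"
  let ?f = "\<lambda>j. d j + of_int (?m j)"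
  have enough: "int (card G) \<le> capacity NA d (?f j)" for j
    using le_capacity_at_grid_point_iff[of NA "card G" d j "?m j"] NA_pos by simp
  have "Max (d ` {1..NA}) \<le> ?f j" for j
  proof (rule ccontr)
    assume "\<not> Max (d ` {1..NA}) \<le> ?f j"
    then have "capacity NA d (?f j) \<le> capacity NA d (Max (d ` {1..NA}))"
      by (intro capacity_mono) simp
    with enough[of j] exceeds show False by linarith
  qed
  then have feasible: "?f j \<in> feasible_values NA d G" for j
    using enough by (auto simp: feasible_values_iff[OF finite_G] dest: order_trans[rotated])
  have least: "Min (?f ` {1..NA}) \<le> D" if D: "D \<in> feasible_values NA d G" for D
  proof -
    obtain j where j: "j \<in> {1..NA}" and below: "d j + of_int \<lfloor>D - d j\<rfloor> \<le> D"
      and cap: "capacity NA d D \<le> capacity NA d (d j + of_int \<lfloor>D - d j\<rfloor>)"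
      using capacity_le_at_grid_point_below[OF NA_pos] by blast
    have "int (card G) \<le> capacity NA d (d j + of_int \<lfloor>D - d j\<rfloor>)"
      using D cap by (auto simp: feasible_values_iff[OF finite_G])
    then have "?f j \<le> D"
      using le_capacity_at_grid_point_iff NA_pos below by fastforce
    then show ?thesis using j by (meson Min_le finite_atLeastAtMost finite_imageI image_eqI order_trans)
  qed
  have "Min (?f ` {1..NA}) \<in> ?f ` {1..NA}" using NA_pos by (intro Min_in) auto
  then show ?thesis using feasible least unfolding is_optimal_value_def by auto
qed

end

theorem lemma2:
  fixes NA :: nat and d :: "nat \<Rightarrow> real" and G :: "'a set"
  assumes "NA \<ge> 1" and "finite G"
  defines "dbar \<equiv> Max (d ` {1..NA})"
  defines "DeltaN \<equiv> (\<Sum>i=1..NA. \<lfloor>dbar - d i\<rfloor>)"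
  shows "is_optimal_value NA d G
           (if int (card G) \<le> DeltaN then dbar
            else Min ((\<lambda>j. d j + of_int \<lceil>(real (card G) + of_int (\<Sum>k=1..NA. \<lceil>d k - d j\<rceil>)) / real NA\<rceil>)
                      ` {1..NA}))"
proof -
  have "DeltaN = capacity NA d dbar" by (simp add: DeltaN_def capacity_def)
  then show ?thesis
    using is_optimal_value_Max[OF assms(1,2)] is_optimal_value_Min_grid[OF assms(1,2)]
    by (simp add: dbar_def)
qed

end
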